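(* Let $h\ge2$ be an integer and $a,b\in\{1,\dots,h-1\}$ integers, and let $T=\operatorname{conv}\{(0,0),(a,h),(h,b)\}$. Then $\operatorname{ls}_\square(T)=h$. Moreover, $T$ is minimal (i.e. there is no lattice polygon $P'\subsetneq T$ with $\operatorname{ls}_\square(P')=h$) if and only if $a+b\ge h$.
   Context: A lattice polygon is a convex polygon (possibly degenerate, e.g. a segment) all of whose vertices lie in $\mathbb Z^2$. An affine unimodular transformation is $x\mapsto Ax+v$ with $A\in\mathbb Z^{2\times2}$, $\det A=\pm1$, $v\in\mathbb Z^2$. With $\square=[0,1]^2$, $\operatorname{ls}_\square(P)$ is the smallest $l\ge0$ such that $\varphi(P)\subseteq l\square$ for some affine unimodular $\varphi$. A lattice polygon $P$ with $\operatorname{ls}_\square(P)=h$ is minimal if no lattice polygon properly contained in $P$ has $\operatorname{ls}_\square$ equal to $h$. *)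

theory Defs
  imports "HOL-Analysis.Analysis"
begin

definition lattice_point :: "real \<times> real \<Rightarrow> bool" where
  "lattice_point p \<longleftrightarrow> fst p \<in> \<int> \<and> snd p \<in> \<int>"

(* convex hull of a finite nonempty set of lattice points (possibly degenerate) *)
definition lattice_polygon :: "(real \<times> real) set \<Rightarrow> bool" where
  "lattice_polygon P \<longleftrightarrow>
     (\<exists>S. finite S \<and> S \<noteq> {} \<and> (\<forall>p\<in>S. lattice_point p) \<and> P = convex hull S)"

definition affine_unimodular :: "(real \<times> real \<Rightarrow> real \<times> real) \<Rightarrow> bool" where
  "affine_unimodular \<phi> \<longleftrightarrow>
     (\<exists>a b c d v1 v2 :: int. (a * d - b * c = 1 \<or> a * d - b * c = -1) \<and>
        \<phi> = (\<lambda>(x, y). (of_int a * x + of_int b * y + of_int v1,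
                         of_int c * x + of_int d * y + of_int v2)))"

definition scaled_square :: "real \<Rightarrow> (real \<times> real) set" where
  "scaled_square l = {(x, y). 0 \<le> x \<and> x \<le> l \<and> 0 \<le> y \<and> y \<le> l}"

definition ls_square :: "(real \<times> real) set \<Rightarrow> real" where
  "ls_square P = Inf {l. 0 \<le> l \<and> (\<exists>\<phi>. affine_unimodular \<phi> \<and> \<phi> ` P \<subseteq> scaled_square l)}"

definition minimal_polygon :: "(real \<times> real) set \<Rightarrow> bool" where
  "minimal_polygon P \<longleftrightarrow> lattice_polygon P \<and>
     \<not> (\<exists>Q. lattice_polygon Q \<and> Q \<subset> P \<and> ls_square Q = ls_square P)"

end

theory Submission
  imports Defs
begin

text \<open>
  If a unimodular map \<open>x \<mapsto> A x + v\<close> sends a polygon \<open>P\<close> into \<open>l\<box>\<close>, then each row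
  \<open>(p, q)\<close> of \<open>A\<close> is a direction in which the lattice width
  \<open>max (p x + q y) - min (p x + q y)\<close> of \<open>P\<close> is at most \<open>l\<close>, and the two rows are not parallel.
  The triangle \<open>T\<close> has width at least \<open>h\<close> in every direction except \<open>\<plusminus>(1, -1)\<close>, so
  \<open>ls(T) = h\<close>, realised by \<open>T \<subseteq> h\<box>\<close>.
  If \<open>a + b < h\<close>, lowering the vertex \<open>(a, h)\<close> to \<open>(a, h - 1)\<close> gives a smaller triangle whose
  width is still at least \<open>h\<close> in every direction except \<open>\<plusminus>(0, 1)\<close>, so \<open>T\<close> is not minimal.
  If \<open>a + b \<ge> h\<close>, a proper lattice subpolygon misses some vertex of \<open>T\<close>, and all lattice points
  of \<open>T\<close> other than that vertex lie in a unimodular image of \<open>(h - 1)\<box>\<close>.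
\<close>

lemma triangle_width_ge:
  fixes h a b p q :: int
  assumes "0 \<le> a" "a \<le> h - 1" "0 \<le> b" "b \<le> h - 1" "(p, q) \<noteq> (0, 0)" "p + q \<noteq> 0"
  shows "h \<le> \<bar>p * a + q * h\<bar> \<or> h \<le> \<bar>p * h + q * b\<bar>"
proof -
  have *: "h \<le> \<bar>p * a + q * h\<bar> \<or> h \<le> \<bar>p * h + q * b\<bar>"
    if pq: "0 \<le> q" "(p, q) \<noteq> (0, 0)" "p + q \<noteq> 0" for p q
  proof (cases "0 \<le> p")
    case True
    then consider "1 \<le> q" | "q = 0" "1 \<le> p" using pq by fastforce
    then show ?thesis
    proof cases
      case 1
      have "1 * h \<le> q * h" "0 \<le> p * a" using 1 True assms by (simp_all add: mult_right_mono)
      then show ?thesis by linarith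
    next
      case 2
      have "1 * h \<le> p * h" using 2 assms by (simp add: mult_right_mono)
      then show ?thesis using 2 by simp arith
    qed
  next
    case False
    have bounds: "-p * a \<le> -p * (h - 1)" "q * b \<le> q * (h - 1)"
      using False pq assms by (simp_all add: mult_left_mono)
    consider "-p + 1 \<le> q" | "q + 1 \<le> -p" using pq by linarith
    then show ?thesis
    proof cases
      case 1
      have "1 * h \<le> (q + p) * h" using 1 assms by (intro mult_right_mono) auto
      then have "h \<le> p * a + q * h" using bounds False by (simp add: algebra_simps)
      then show ?thesis by arith
    next
      case 2
      have "1 * h \<le> (-p - q) * h" using 2 assms by (intro mult_right_mono) auto
      then have "p * h + q * b \<le> -h" using bounds pq by (simp add: algebra_simps)
      then show ?thesis by arith
    qed
  qed
  show ?thesis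
  proof (cases "0 \<le> q")
    case True
    then show ?thesis using * assms(5,6) by blast
  next
    case False
    then show ?thesis using *[where p="-p" and q="-q"] assms(5,6) by (simp add: abs_minus_commute add.commute)
  qed
qed

lemma lowered_triangle_width_ge:
  fixes h a b p q :: int
  assumes "0 \<le> a" "0 \<le> b" "a + b \<le> h - 1" "p \<noteq> 0"
  shows "h \<le> \<bar>p * h + q * b\<bar> \<or> h \<le> \<bar>p * (h - a) + q * (b - (h - 1))\<bar>"
proof -
  have *: "h \<le> p * h + q * b \<or> h \<le> p * (h - a) + q * (b - (h - 1))" if "1 \<le> p" for p q
  proof -
    have ph: "1 * h \<le> p * h" using that assms by (intro mult_right_mono) auto
    consider "0 \<le> q" | "q < 0" "-q < p" | "q < 0" "p \<le> -q" by linarith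
    then show ?thesis
    proof cases
      case 1
      then have "0 \<le> q * b" using assms by simp
      then show ?thesis using ph by simp
    next
      case 2
      have "1 * h \<le> (p + q) * h" "-q * b \<le> -q * (h - 1)"
        using 2 assms by (auto intro: mult_right_mono mult_left_mono)
      then show ?thesis using 2 by (simp add: algebra_simps)
    next
      case 3
      have "p * (h - 1 - b) \<le> -q * (h - 1 - b)" "p * a \<le> p * (h - 1 - b)"
        using 3 that assms by (intro mult_right_mono mult_left_mono; simp)+
      then show ?thesis using ph by (simp add: algebra_simps)
    qed
  qed
  show ?thesis
  proof (cases "1 \<le> p")
    case True
    then show ?thesis using *[of p q] by arith
  next
    case False
    then show ?thesis using *[of "-p" "-q"] assms(4) by (simp add: algebra_simps) arith
  qed
qed

definition int_affine :: "int \<Rightarrow> int \<Rightarrow> int \<Rightarrow> int \<Rightarrow> int \<Rightarrow> int \<Rightarrow> real \<times> real \<Rightarrow> real \<times> real" where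
  "int_affine a b c d v1 v2 = (\<lambda>(x, y).
     (of_int a * x + of_int b * y + of_int v1, of_int c * x + of_int d * y + of_int v2))"

lemma affine_unimodular_iff:
  "affine_unimodular \<phi> \<longleftrightarrow>
     (\<exists>a b c d v1 v2. \<bar>a * d - b * c\<bar> = 1 \<and> \<phi> = int_affine a b c d v1 v2)"
  unfolding affine_unimodular_def int_affine_def by (simp add: abs_eq_iff')

lemma affine_unimodular_int_affine:
  "\<bar>a * d - b * c\<bar> = 1 \<Longrightarrow> affine_unimodular (int_affine a b c d v1 v2)"
  unfolding affine_unimodular_iff by blast

lemma affine_unimodular_id: "affine_unimodular id"
proof -
  have "id = int_affine 1 0 0 1 0 0" by (auto simp: int_affine_def)
  then show ?thesis using affine_unimodular_int_affine[of 1 1 0 0 0 0] by simp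
qed

lemma int_affine_of_int:
  "int_affine a b c d v1 v2 (of_int i, of_int j) = (of_int (a * i + b * j + v1), of_int (c * i + d * j + v2))"
  by (simp add: int_affine_def)

lemma int_affine_convex_combination:
  assumes "u + v = 1"
  shows "int_affine a b c d v1 v2 (u *\<^sub>R x + v *\<^sub>R y) =
    u *\<^sub>R int_affine a b c d v1 v2 x + v *\<^sub>R int_affine a b c d v1 v2 y"
proof -
  have "of_int w = u * of_int w + v * (of_int w :: real)" for w
    using assms by (metis mult_1 distrib_right)
  then show ?thesis by (cases x, cases y) (simp add: int_affine_def algebra_simps)
qed

lemma convex_scaled_square: "convex (scaled_square l)"
proof -
  have "scaled_square l = {0..l} \<times> {0..l}" by (auto simp: scaled_square_def)
  then show ?thesis by (simp add: convex_Times)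
qed

lemma scaled_square_hull:
  assumes "S \<subseteq> scaled_square l"
  shows "convex hull S \<subseteq> scaled_square l"
  using assms convex_scaled_square by (rule hull_minimal)

lemma affine_unimodular_hull_subset_square:
  assumes "affine_unimodular \<phi>" "\<phi> ` S \<subseteq> scaled_square l"
  shows "\<phi> ` (convex hull S) \<subseteq> scaled_square l"
proof -
  have "convex (\<phi> -` scaled_square l)"
  proof -
    obtain a b c d v1 v2 where "\<phi> = int_affine a b c d v1 v2"
      using assms(1) affine_unimodular_iff by blast
    then show ?thesis
      using convex_scaled_square unfolding convex_def
      by (simp add: int_affine_convex_combination)
  qed
  then have "convex hull S \<subseteq> \<phi> -` scaled_square l"
    using assms(2) by (intro hull_minimal) auto
  then show ?thesis by blast
qed

lemma ls_square_le:
  assumes "affine_unimodular \<phi>" "\<phi> ` P \<subseteq> scaled_square l" "0 \<le> l"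
  shows "ls_square P \<le> l"
  unfolding ls_square_def by (rule cInf_lower) (use assms in \<open>auto intro: bdd_belowI[of _ 0]\<close>)

lemma ls_square_hull_le:
  assumes "affine_unimodular \<phi>" "\<phi> ` S \<subseteq> scaled_square l" "0 \<le> l"
  shows "ls_square (convex hull S) \<le> l"
  using assms affine_unimodular_hull_subset_square ls_square_le by meson

lemma ls_square_eqI:
  assumes "\<And>\<phi> l. affine_unimodular \<phi> \<Longrightarrow> \<phi> ` P \<subseteq> scaled_square l \<Longrightarrow> m \<le> l"
    and "affine_unimodular \<psi>" "\<psi> ` P \<subseteq> scaled_square m" "0 \<le> m"
  shows "ls_square P = m"
  unfolding ls_square_def by (rule cInf_eq_minimum) (use assms in auto)

lemma parallel_rows_det_zero:
  fixes a b c d m n :: int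
  assumes "(m, n) \<noteq> (0, 0)" "a * n = b * m" "c * n = d * m"
  shows "a * d - b * c = 0"
proof -
  have "(a * d - b * c) * m = a * (d * m) - c * (b * m)" by (simp add: algebra_simps)
  also have "\<dots> = a * (c * n) - c * (a * n)" by (simp only: assms(2,3))
  also have "\<dots> = 0" by (simp add: mult.left_commute)
  finally have m: "(a * d - b * c) * m = 0" .
  have "(a * d - b * c) * n = d * (a * n) - b * (c * n)" by (simp add: algebra_simps)
  also have "\<dots> = d * (b * m) - b * (d * m)" by (simp only: assms(2,3))
  also have "\<dots> = 0" by (simp add: mult.left_commute)
  finally have "(a * d - b * c) * n = 0" .
  then show ?thesis using m assms(1) by auto
qed

lemma unimodular_square_ge_width:
  fixes m n :: int and h l :: real
  assumes "(m, n) \<noteq> (0, 0)"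
    and width: "\<And>p q. (p, q) \<noteq> (0, 0) \<Longrightarrow> p * n \<noteq> q * m \<Longrightarrow>
      \<exists>x\<in>P. \<exists>y\<in>P. h \<le> \<bar>of_int p * (fst y - fst x) + of_int q * (snd y - snd x)\<bar>"
    and "affine_unimodular \<phi>" "\<phi> ` P \<subseteq> scaled_square l"
  shows "h \<le> l"
proof -
  obtain a b c d v1 v2 where det: "\<bar>a * d - b * c\<bar> = 1" and \<phi>: "\<phi> = int_affine a b c d v1 v2"
    using assms(3) affine_unimodular_iff by blast
  have row_bound: "h \<le> l"
    if pq: "(p, q) \<noteq> (0, 0)" "p * n \<noteq> q * m"
      and row: "\<And>z. z \<in> P \<Longrightarrow> 0 \<le> of_int p * fst z + of_int q * snd z + v \<and> of_int p * fst z + of_int q * snd z + v \<le> l"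
    for p q :: int and v :: real
  proof -
    obtain x y where "x \<in> P" "y \<in> P" and
      xy: "h \<le> \<bar>of_int p * (fst y - fst x) + of_int q * (snd y - snd x)\<bar>"
      using width pq by blast
    have "\<bar>(of_int p * fst y + of_int q * snd y + v) - (of_int p * fst x + of_int q * snd x + v)\<bar> \<le> l"
      using row[OF \<open>x \<in> P\<close>] row[OF \<open>y \<in> P\<close>] by linarith
    with xy show ?thesis by (simp add: algebra_simps)
  qed
  have rows: "0 \<le> of_int a * fst z + of_int b * snd z + of_int v1 \<and> of_int a * fst z + of_int b * snd z + of_int v1 \<le> l"
    "0 \<le> of_int c * fst z + of_int d * snd z + of_int v2 \<and> of_int c * fst z + of_int d * snd z + of_int v2 \<le> l"
    if "z \<in> P" for z
    using assms(4) that by (auto simp: \<phi> int_affine_def scaled_square_def split: prod.splits)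
  have nonzero: "(a, b) \<noteq> (0, 0)" "(c, d) \<noteq> (0, 0)" using det by auto
  have "a * n \<noteq> b * m \<or> c * n \<noteq> d * m"
    using parallel_rows_det_zero[OF assms(1), of a b c d] det by auto
  then show ?thesis
  proof
    assume "a * n \<noteq> b * m"
    with nonzero(1) show ?thesis using rows(1) by (rule row_bound)
  next
    assume "c * n \<noteq> d * m"
    with nonzero(2) show ?thesis using rows(2) by (rule row_bound)
  qed
qed

lemma ls_square_eq_width:
  fixes m n :: int and h :: real
  assumes "(m, n) \<noteq> (0, 0)"
    and "\<And>p q. (p, q) \<noteq> (0, 0) \<Longrightarrow> p * n \<noteq> q * m \<Longrightarrow>
      \<exists>x\<in>P. \<exists>y\<in>P. h \<le> \<bar>of_int p * (fst y - fst x) + of_int q * (snd y - snd x)\<bar>"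
    and "P \<subseteq> scaled_square h" "0 \<le> h"
  shows "ls_square P = h"
proof (rule ls_square_eqI[OF _ affine_unimodular_id])
  show "h \<le> l" if "affine_unimodular \<phi>" "\<phi> ` P \<subseteq> scaled_square l" for \<phi> l
    using unimodular_square_ge_width[OF assms(1,2) that] .
qed (use assms(3,4) in auto)

lemma lattice_width_witness:
  fixes x1 x2 y1 y2 p q h :: int and P :: "(real \<times> real) set"
  assumes "(of_int x1, of_int x2) \<in> P" "(of_int y1, of_int y2) \<in> P"
    and "h \<le> \<bar>p * (y1 - x1) + q * (y2 - x2)\<bar>"
  shows "\<exists>x\<in>P. \<exists>y\<in>P. of_int h \<le> \<bar>of_int p * (fst y - fst x) + of_int q * (snd y - snd x)\<bar>"
proof -
  have "of_int h \<le> \<bar>of_int p * (of_int y1 - of_int x1) + of_int q * (of_int y2 - of_int x2) :: real\<bar>"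
    using assms(3) by (metis of_int_abs of_int_add of_int_diff of_int_le_iff of_int_mult)
  then show ?thesis
    by (intro bexI[OF _ assms(1)] bexI[OF _ assms(2)]) simp
qed

lemma lattice_point_iff: "lattice_point s \<longleftrightarrow> (\<exists>i j. s = (of_int i, of_int j))"
  unfolding lattice_point_def by (cases s) (auto elim!: Ints_cases)

lemma ls_square_lattice_hull_le:
  fixes a b c d v1 v2 l :: int
  assumes "\<bar>a * d - b * c\<bar> = 1" "0 \<le> l" "\<forall>s\<in>S. lattice_point s"
    and box: "\<And>i j. (of_int i, of_int j) \<in> S \<Longrightarrow>
      0 \<le> a * i + b * j + v1 \<and> a * i + b * j + v1 \<le> l \<and> 0 \<le> c * i + d * j + v2 \<and> c * i + d * j + v2 \<le> l"
  shows "ls_square (convex hull S) \<le> of_int l"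
proof (rule ls_square_hull_le[OF affine_unimodular_int_affine[OF assms(1)]])
  show "int_affine a b c d v1 v2 ` S \<subseteq> scaled_square (of_int l)"
  proof
    fix z assume "z \<in> int_affine a b c d v1 v2 ` S"
    then obtain i j where "(of_int i, of_int j) \<in> S" "z = int_affine a b c d v1 v2 (of_int i, of_int j)"
      using assms(3) lattice_point_iff by auto
    then show "z \<in> scaled_square (of_int l)"
      using box by (simp only: int_affine_of_int scaled_square_def mem_Collect_eq prod.case
          of_int_0_le_iff of_int_le_iff)
  qed
qed (use assms(2) in simp)

lemma convex_hull_3_inner_ge:
  assumes "s \<in> convex hull {p, q, r}" "c \<le> inner w p" "c \<le> inner w q" "c \<le> inner w r"
  shows "c \<le> inner w s"
proof -
  have "convex hull {p, q, r} \<subseteq> {x. c \<le> inner w x}"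
    using assms(2-4) by (intro hull_minimal) (auto simp: convex_halfspace_ge)
  then show ?thesis using assms(1) by blast
qed

lemma convex_hull_3_inner_gt:
  fixes p q r s w :: "'a::real_inner"
  assumes "s \<in> convex hull {p, q, r}" "s \<noteq> p" "inner w p < inner w q" "inner w p < inner w r"
  shows "inner w p < inner w s"
proof -
  obtain u v t where uvt: "0 \<le> u" "0 \<le> v" "0 \<le> t" "u + v + t = 1"
    and s: "s = u *\<^sub>R p + v *\<^sub>R q + t *\<^sub>R r"
    using assms(1) unfolding convex_hull_3 by blast
  have "v \<noteq> 0 \<or> t \<noteq> 0"
    using assms(2) s uvt by auto
  moreover have "inner w s - inner w p = v * (inner w q - inner w p) + t * (inner w r - inner w p)"
  proof -
    have "inner w s = u * inner w p + v * inner w q + t * inner w r"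
      by (simp add: s inner_add_right)
    with uvt(4) show ?thesis by algebra
  qed
  moreover have "0 < v * (inner w q - inner w p) \<or> 0 < t * (inner w r - inner w p)"
    using \<open>v \<noteq> 0 \<or> t \<noteq> 0\<close> uvt(2,3) assms(3,4) by auto
  moreover have "0 \<le> v * (inner w q - inner w p)" "0 \<le> t * (inner w r - inner w p)"
    using uvt(2,3) assms(3,4) by simp_all
  ultimately show ?thesis by linarith
qed

lemma lattice_polygon_triangle:
  fixes a b c d e f :: int
  shows "lattice_polygon (convex hull {(of_int a, of_int b), (of_int c, of_int d), (of_int e, of_int f)})"
  unfolding lattice_polygon_def lattice_point_def by (intro exI[of _ "{_, _, _}"]) auto

lemma ls_square_triangle:
  fixes h a b :: int
  assumes "0 \<le> a" "a \<le> h - 1" "0 \<le> b" "b \<le> h - 1"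
  shows "ls_square (convex hull {(0, 0), (of_int a, of_int h), (of_int h, of_int b)}) = of_int h"
    (is "ls_square ?T = _")
proof (rule ls_square_eq_width[where m = 1 and n = "-1"])
  fix p q :: int
  assume "(p, q) \<noteq> (0, 0)" "p * -1 \<noteq> q * 1"
  then have "h \<le> \<bar>p * (a - 0) + q * (h - 0)\<bar> \<or> h \<le> \<bar>p * (h - 0) + q * (b - 0)\<bar>"
    using triangle_width_ge[OF assms, of p q] by simp
  moreover have "(of_int 0, of_int 0) \<in> ?T" "(of_int a, of_int h) \<in> ?T" "(of_int h, of_int b) \<in> ?T"
    by (simp_all add: hull_inc)
  ultimately show "\<exists>x\<in>?T. \<exists>y\<in>?T. of_int h \<le> \<bar>of_int p * (fst y - fst x) + of_int q * (snd y - snd x)\<bar>"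
    using lattice_width_witness by blast
next
  show "?T \<subseteq> scaled_square (of_int h)"
    using assms by (intro scaled_square_hull) (simp add: scaled_square_def)
qed (use assms in simp_all)

lemma lowered_vertex_in_triangle:
  fixes a b h :: real
  assumes "0 \<le> a" "a \<le> h - 1" "0 \<le> b" "b \<le> h - 1"
  shows "(a, h - 1) \<in> convex hull {(0, 0), (a, h), (h, b)}"
proof -
  \<comment> \<open>barycentric coordinates of \<open>(a, h - 1)\<close> with respect to \<open>(a, h)\<close> and \<open>(h, b)\<close>\<close>
  define D where "D = h * h - a * b"
  define v where "v = (h * h - h - a * b) / D"
  define w where "w = a / D"
  have "a * b \<le> (h - 1) * (h - 1)" using assms by (intro mult_mono) auto
  then have num: "0 \<le> h * h - h - a * b" and D: "0 < D"
    using assms by (simp_all add: D_def algebra_simps)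
  have "0 \<le> v" "0 \<le> w" using num D assms by (simp_all add: v_def w_def)
  moreover have "0 \<le> 1 - v - w"
  proof -
    have "h * h - h - a * b + a \<le> D" using assms by (simp add: D_def)
    then have "v + w \<le> 1" using D by (simp add: v_def w_def add_divide_distrib [symmetric])
    then show ?thesis by simp
  qed
  moreover have "(1 - v - w) + v + w = 1" by simp
  ultimately have combination:
    "(1 - v - w) *\<^sub>R (0, 0) + v *\<^sub>R (a, h) + w *\<^sub>R (h, b) \<in> convex hull {(0, 0), (a, h), (h, b)}"
    unfolding convex_hull_3 by blast
  have "v * a + w * h = a" "v * h + w * b = h - 1"
    using D unfolding v_def w_def by (simp_all add: field_simps) (simp_all add: D_def algebra_simps)
  then have "(a, h - 1) = (1 - v - w) *\<^sub>R (0, 0) + v *\<^sub>R (a, h) + w *\<^sub>R (h, b)"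
    by (simp add: mult.commute)
  with combination show ?thesis by (simp only:)
qed

lemma ls_square_lowered_triangle:
  fixes h a b :: int
  assumes "0 \<le> a" "0 \<le> b" "a + b \<le> h - 1"
  shows "ls_square (convex hull {(0, 0), (of_int a, of_int (h - 1)), (of_int h, of_int b)}) = of_int h"
    (is "ls_square ?Q = _")
proof (rule ls_square_eq_width[where m = 0 and n = 1])
  fix p q :: int
  assume "(p, q) \<noteq> (0, 0)" "p * 1 \<noteq> q * 0"
  then have "h \<le> \<bar>p * (h - 0) + q * (b - 0)\<bar> \<or> h \<le> \<bar>p * (h - a) + q * (b - (h - 1))\<bar>"
    using lowered_triangle_width_ge[OF assms, of p q] by simp
  moreover have "(of_int 0, of_int 0) \<in> ?Q" "(of_int a, of_int (h - 1)) \<in> ?Q" "(of_int h, of_int b) \<in> ?Q"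
    by (simp_all add: hull_inc)
  ultimately show "\<exists>x\<in>?Q. \<exists>y\<in>?Q. of_int h \<le> \<bar>of_int p * (fst y - fst x) + of_int q * (snd y - snd x)\<bar>"
    using lattice_width_witness by blast
next
  show "?Q \<subseteq> scaled_square (of_int h)"
    using assms by (intro scaled_square_hull) (simp add: scaled_square_def)
qed (use assms in simp_all)

lemma triangle_not_minimal:
  fixes h a b :: int
  assumes "0 \<le> a" "0 \<le> b" "a + b < h"
  shows "\<not> minimal_polygon (convex hull {(0, 0), (of_int a, of_int h), (of_int h, of_int b)})"
    (is "\<not> minimal_polygon ?T")
proof -
  let ?Q = "convex hull {(0, 0), (of_int a, of_int (h - 1)), (of_int h, of_int b)} :: (real \<times> real) set"
  have "(of_int a, of_int (h - 1)) \<in> ?T"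
    using lowered_vertex_in_triangle[of "of_int a" "of_int h" "of_int b"] assms by simp
  then have "?Q \<subseteq> ?T"
    by (intro hull_minimal) (auto simp: hull_inc convex_convex_hull)
  moreover have "(of_int a, of_int h) \<notin> ?Q"
  proof
    assume "(of_int a, of_int h) \<in> ?Q"
    then have "1 - of_int h \<le> inner (0, -1) (of_int a :: real, of_int h :: real)"
      by (rule convex_hull_3_inner_ge) (use assms in auto)
    then show False by simp
  qed
  ultimately have "?Q \<subset> ?T" by (auto simp: hull_inc)
  moreover have "ls_square ?Q = ls_square ?T"
    using ls_square_lowered_triangle ls_square_triangle assms by simp
  moreover have "lattice_polygon ?Q"
    using lattice_polygon_triangle[of 0 0 a "h - 1" h b] by simp
  ultimately show ?thesis
    unfolding minimal_polygon_def by blast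
qed

text \<open>
  Each bound compares a linear functional at a point of \<open>T\<close> with its values at the vertices;
  the strict bounds hold because the excluded vertex is the unique minimiser of the functional.
\<close>

lemma triangle_lattice_point_off_origin:
  fixes h a b i j :: int
  assumes "1 \<le> a" "a \<le> h - 1" "1 \<le> b" "b \<le> h - 1" "(i, j) \<noteq> (0, 0)"
    and s: "((of_int i, of_int j) :: real \<times> real) \<in> convex hull {(0, 0), (of_int a, of_int h), (of_int h, of_int b)}"
  shows "0 < i \<and> i \<le> h \<and> 0 < j \<and> j \<le> h"
proof -
  have "((of_int i, of_int j) :: real \<times> real) \<noteq> (0, 0)" using assms(5) by simp
  from convex_hull_3_inner_gt[OF s this, of "(1, 0)"] convex_hull_3_inner_gt[OF s this, of "(0, 1)"]
    convex_hull_3_inner_ge[OF s, of "-of_int h" "(-1, 0)"] convex_hull_3_inner_ge[OF s, of "-of_int h" "(0, -1)"]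
  show ?thesis using assms(1-4) by simp
qed

lemma triangle_lattice_point_off_top:
  fixes h a b i j :: int
  assumes "1 \<le> a" "a \<le> h - 1" "1 \<le> b" "b \<le> h - 1" "(i, j) \<noteq> (a, h)"
    and s: "((of_int i, of_int j) :: real \<times> real) \<in> convex hull {(0, 0), (of_int a, of_int h), (of_int h, of_int b)}"
  shows "0 \<le> j \<and> j < h \<and> a - h < i - j \<and> i - j \<le> h - b"
proof -
  have s': "((of_int i, of_int j) :: real \<times> real) \<in> convex hull {(of_int a, of_int h), (of_int h, of_int b), (0, 0)}"
    using s by (simp add: insert_commute)
  have "((of_int i, of_int j) :: real \<times> real) \<noteq> (of_int a, of_int h)" using assms(5) by simp
  from convex_hull_3_inner_gt[OF s' this, of "(0, -1)"] convex_hull_3_inner_gt[OF s' this, of "(1, -1)"]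
    convex_hull_3_inner_ge[OF s, of 0 "(0, 1)"] convex_hull_3_inner_ge[OF s, of "of_int b - of_int h" "(-1, 1)"]
  show ?thesis using assms(1-4) by simp
qed

lemma triangle_lattice_point_off_right:
  fixes h a b i j :: int
  assumes "1 \<le> a" "a \<le> h - 1" "1 \<le> b" "b \<le> h - 1" "(i, j) \<noteq> (h, b)"
    and s: "((of_int i, of_int j) :: real \<times> real) \<in> convex hull {(0, 0), (of_int a, of_int h), (of_int h, of_int b)}"
  shows "0 \<le> i \<and> i < h \<and> b - h < j - i \<and> j - i \<le> h - a"
proof -
  have s': "((of_int i, of_int j) :: real \<times> real) \<in> convex hull {(of_int h, of_int b), (0, 0), (of_int a, of_int h)}"
    using s by (simp add: insert_commute)
  have "((of_int i, of_int j) :: real \<times> real) \<noteq> (of_int h, of_int b)" using assms(5) by simp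
  from convex_hull_3_inner_gt[OF s' this, of "(-1, 0)"] convex_hull_3_inner_gt[OF s' this, of "(-1, 1)"]
    convex_hull_3_inner_ge[OF s, of 0 "(1, 0)"] convex_hull_3_inner_ge[OF s, of "of_int a - of_int h" "(1, -1)"]
  show ?thesis using assms(1-4) by simp
qed

lemma triangle_proper_subpolygon_ls_le:
  fixes h a b :: int
  assumes "1 \<le> a" "a \<le> h - 1" "1 \<le> b" "b \<le> h - 1" "h \<le> a + b"
    and "lattice_polygon Q" "Q \<subset> convex hull {(0, 0), (of_int a, of_int h), (of_int h, of_int b)}"
  shows "ls_square Q \<le> of_int h - 1"
proof -
  let ?T = "convex hull {(0, 0), (of_int a, of_int h), (of_int h, of_int b)} :: (real \<times> real) set"
  obtain S where S: "\<forall>s\<in>S. lattice_point s" "Q = convex hull S"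
    using assms(6) unfolding lattice_polygon_def by blast
  have "S \<subseteq> ?T"
    using assms(7) S(2) hull_subset[of S convex] by blast
  then have in_T: "(of_int i, of_int j) \<in> ?T" if "(of_int i, of_int j) \<in> S" for i j
    using that by blast
  have "\<not> {(0, 0), (of_int a, of_int h), (of_int h, of_int b)} \<subseteq> S"
  proof
    assume "{(0, 0), (of_int a, of_int h), (of_int h, of_int b)} \<subseteq> S"
    then have "?T \<subseteq> Q" unfolding S(2) by (rule hull_mono)
    with assms(7) show False by blast
  qed
  \<comment> \<open>for each missing vertex, a unimodular map into \<open>(h - 1)\<box>\<close>; here \<open>h \<le> a + b\<close> is used\<close>
  then consider "(of_int 0, of_int 0) \<notin> S" | "(of_int a, of_int h) \<notin> S" | "(of_int h, of_int b) \<notin> S"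
    by auto
  then have "ls_square (convex hull S) \<le> of_int (h - 1)"
  proof cases
    case 1
    then have box: "0 < i \<and> i \<le> h \<and> 0 < j \<and> j \<le> h" if "(of_int i, of_int j) \<in> S" for i j
      using triangle_lattice_point_off_origin[OF assms(1-4) _ in_T[OF that]] that by fastforce
    show ?thesis
      using assms(1-5) box by (intro ls_square_lattice_hull_le[of 1 1 0 0 _ S "-1" "-1"] S(1)) fastforce+
  next
    case 2
    then have box: "0 \<le> j \<and> j < h \<and> a - h < i - j \<and> i - j \<le> h - b" if "(of_int i, of_int j) \<in> S" for i j
      using triangle_lattice_point_off_top[OF assms(1-4) _ in_T[OF that]] that by fastforce
    show ?thesis
      using assms(1-5) box by (intro ls_square_lattice_hull_le[of 1 1 "-1" 0 _ S "h - a - 1" 0] S(1)) fastforce+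
  next
    case 3
    then have box: "0 \<le> i \<and> i < h \<and> b - h < j - i \<and> j - i \<le> h - a" if "(of_int i, of_int j) \<in> S" for i j
      using triangle_lattice_point_off_right[OF assms(1-4) _ in_T[OF that]] that by fastforce
    show ?thesis
      using assms(1-5) box by (intro ls_square_lattice_hull_le[of 1 1 0 "-1" _ S 0 "h - b - 1"] S(1)) fastforce+
  qed
  then show ?thesis using S(2) by simp
qed

theorem mainTheorem6:
  fixes h a b :: int
  assumes "h \<ge> 2" and "1 \<le> a" and "a \<le> h - 1" and "1 \<le> b" and "b \<le> h - 1"
  defines "T \<equiv> convex hull {(0, 0), (real_of_int a, real_of_int h), (real_of_int h, real_of_int b)}"
  shows "ls_square T = real_of_int h \<and> (minimal_polygon T \<longleftrightarrow> a + b \<ge> h)"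
proof -
  have ls_T: "ls_square T = of_int h"
    unfolding T_def using assms(2-5) by (intro ls_square_triangle) auto
  have "minimal_polygon T \<longleftrightarrow> h \<le> a + b"
  proof
    assume "minimal_polygon T"
    then show "h \<le> a + b"
      using triangle_not_minimal[of a b h] assms(2,4) unfolding T_def by fastforce
  next
    assume "h \<le> a + b"
    have "ls_square Q < ls_square T" if "lattice_polygon Q" "Q \<subset> T" for Q
      using triangle_proper_subpolygon_ls_le[OF assms(2-5) \<open>h \<le> a + b\<close> that[unfolded T_def]] ls_T
      by simp
    moreover have "lattice_polygon T"
      unfolding T_def using lattice_polygon_triangle[of 0 0 a h h b] by simp
    ultimately show "minimal_polygon T"
      unfolding minimal_polygon_def by fastforce
  qed
  with ls_T show ?thesis by blast
qed

end
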